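(* Let $M=(m_0,m_1,m_2,\ldots)$ be a (possibly finite) sequence of integers with $m_0=1$ and $m_j\ge 2$ for all $j\ge 1$. Then for all positive integers $n$ and $r$ (with $r$ at most the largest index of $M$ if $M$ is finite) we have $$p_M(m_1m_2\cdots m_r\,n-1)\equiv 0 \pmod{\prod_{t=2}^{r}\mathcal{M}(m_t,t-1)}.$$
   Context: For $r\ge 0$ put $M_r:=m_0m_1\cdots m_r$. An $M$-ary partition of a positive integer $N$ is a representation $N=M_{r_1}+M_{r_2}+\cdots+M_{r_s}$ with nonnegative integers $r_1,\ldots,r_s$, where the order of the summands is disregarded (i.e. a partition of $N$ all of whose parts are of the form $M_r$). $p_M(N)$ denotes the number of $M$-ary partitions of $N$. For positive integers $m,r$ define $\mathcal{M}(m,r):=\dfrac{m}{\gcd\big(m,\operatorname{lcm}(1,2,\ldots,r)\big)}$. An empty product (the case $r=1$) equals $1$. *)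

theory Defs
  imports Main "HOL-Library.Multiset" "HOL-Library.Extended_Nat"
begin

text \<open>The sequence M = (m_0, m_1, ...) is a function m :: nat => nat together with its
  largest index L :: enat (L = infinity for an infinite sequence). Only indices
  j with enat j <= L belong to the sequence.\<close>

definition Mprod :: "(nat \<Rightarrow> nat) \<Rightarrow> nat \<Rightarrow> nat" where
  "Mprod m r = (\<Prod>i\<le>r. m i)"

text \<open>An M-ary partition of N: a finite multiset of indices s (each s an index of the
  sequence) such that the parts M_s sum to N; p_M(N) is the number of these.\<close>
definition pM :: "(nat \<Rightarrow> nat) \<Rightarrow> enat \<Rightarrow> nat \<Rightarrow> nat" where
  "pM m L N = card {S :: nat multiset. (\<forall>s\<in>#S. enat s \<le> L) \<and>
                      sum_mset (image_mset (Mprod m) S) = N}"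

definition calM :: "nat \<Rightarrow> nat \<Rightarrow> nat" where
  "calM m r = m div gcd m (Lcm {1..r})"

end

theory Submission
  imports Defs
begin

text \<open>Let \<open>p_s\<close> count the partitions for the sequence \<open>(1, m_(s+1), m_(s+2), ...)\<close>, so
  \<open>p_0 = p_M\<close>. Splitting off the parts equal to \<open>1\<close> gives
  \<open>p_s(N) = (\<Sum>j \<le> N div m_(s+1). p_(s+1)(j))\<close>, and iterating this \<open>r\<close> times gives
  \<open>p_M(m_1 \<cdots> m_r n - 1) = (\<Sum>i<n. p_r(i) Q_r(n - i))\<close> with \<open>Q_0(k) = [k = 1]\<close> and
  \<open>Q_(t+1)(k) = (\<Sum>j < m_(t+1) k. Q_t(j + 1))\<close>. By induction on \<open>t\<close>,
  \<open>Q_t(j + 1) = D_t g_t(j)\<close> where \<open>D_t\<close> is the product in the theorem and \<open>g_t\<close> is an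
  integer-valued polynomial of degree at most \<open>t - 1\<close>: the prefix sums \<open>H\<close> of \<open>g_t\<close> form a
  polynomial of degree at most \<open>t\<close> with \<open>H(0) = 0\<close>, and in Newton's expansion
  \<open>H(x) = (\<Sum>i \<le> t. (x choose i) \<Delta>\<^sup>i H(0))\<close> every coefficient \<open>(b k choose i)\<close> with
  \<open>1 \<le> i \<le> t\<close> becomes a multiple of \<open>b\<close> after multiplication by \<open>lcm(1, ..., t)\<close>.
  Hence \<open>\<M>(b, t)\<close> divides \<open>H(b k)\<close>, and \<open>H(b (j + 1)) / \<M>(b, t)\<close> is again a polynomial
  of degree at most \<open>t\<close> in \<open>j\<close>.\<close>

section \<open>Polynomial functions via forward differences\<close>

definition fwd_diff :: "(nat \<Rightarrow> 'a::ab_group_add) \<Rightarrow> nat \<Rightarrow> 'a" where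
  "fwd_diff f x = f (Suc x) - f x"

definition fwd_diff_by :: "nat \<Rightarrow> (nat \<Rightarrow> 'a::ab_group_add) \<Rightarrow> nat \<Rightarrow> 'a" where
  "fwd_diff_by b f x = f (x + b) - f x"

definition window_sum :: "nat \<Rightarrow> (nat \<Rightarrow> 'a::comm_monoid_add) \<Rightarrow> nat \<Rightarrow> 'a" where
  "window_sum b f x = (\<Sum>i<b. f (x + i))"

text \<open>A polynomial function of degree at most \<open>d\<close> is one whose \<open>(d + 1)\<close>-st forward difference
  vanishes; this also covers integer-valued polynomials with non-integral coefficients.\<close>
definition poly_deg_le :: "nat \<Rightarrow> (nat \<Rightarrow> 'a::ab_group_add) \<Rightarrow> bool" where
  "poly_deg_le d f \<longleftrightarrow> (fwd_diff ^^ Suc d) f = (\<lambda>_. 0)"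

lemma fwd_diff_funpow_zero: "(fwd_diff ^^ n) (\<lambda>_. 0) = (\<lambda>_. 0 :: 'a::ab_group_add)"
  by (induction n) (auto simp: fwd_diff_def)

lemma window_sum_funpow_zero: "(window_sum b ^^ n) (\<lambda>_. 0) = (\<lambda>_. 0 :: 'a::comm_monoid_add)"
  by (induction n) (auto simp: window_sum_def)

lemma fwd_diff_funpow_cmult:
  "(fwd_diff ^^ n) (\<lambda>x. c * f x) = (\<lambda>x. c * (fwd_diff ^^ n) f x :: 'a::ring)"
  by (induction n) (auto simp: fwd_diff_def algebra_simps)

lemma fwd_diff_funpow_Suc_arg:
  "(fwd_diff ^^ n) (\<lambda>x. f (Suc x)) = (\<lambda>x. (fwd_diff ^^ n) f (Suc x))"
  by (induction n) (auto simp: fwd_diff_def)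

lemma fwd_diff_prefix_sum: "fwd_diff (\<lambda>x. \<Sum>j<x. f j) = f"
  by (auto simp: fwd_diff_def fun_eq_iff)

lemma fwd_diff_window_sum: "fwd_diff (window_sum b f) = window_sum b (fwd_diff f)"
  by (auto simp: fwd_diff_def window_sum_def fun_eq_iff sum_subtractf)

lemma fwd_diff_by_eq_window_sum: "fwd_diff_by b f = window_sum b (fwd_diff f)"
proof -
  have "(\<Sum>i<b. f (Suc (x + i)) - f (x + i)) = f (x + b) - f x" for x
    by (induction b) auto
  then show ?thesis
    by (auto simp: fwd_diff_by_def window_sum_def fwd_diff_def fun_eq_iff)
qed

lemma fwd_diff_window_sum_funpow:
  "fwd_diff ((window_sum b ^^ n) f) = (window_sum b ^^ n) (fwd_diff f)"
  by (induction n) (auto simp: fwd_diff_window_sum)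

lemma fwd_diff_by_funpow: "(fwd_diff_by b ^^ n) f = (window_sum b ^^ n) ((fwd_diff ^^ n) f)"
proof (induction n)
  case (Suc n)
  have "(fwd_diff_by b ^^ Suc n) f = window_sum b (fwd_diff ((window_sum b ^^ n) ((fwd_diff ^^ n) f)))"
    by (simp add: Suc fwd_diff_by_eq_window_sum)
  then show ?case
    by (simp add: fwd_diff_window_sum_funpow)
qed simp

lemma fwd_diff_funpow_mult_arg:
  "(fwd_diff ^^ n) (\<lambda>x. f (b * x)) = (\<lambda>x. (fwd_diff_by b ^^ n) f (b * x))"
proof (induction n)
  case (Suc n)
  have "fwd_diff (\<lambda>x. g (b * x)) = (\<lambda>x. fwd_diff_by b g (b * x))" for g :: "nat \<Rightarrow> 'a"
    by (simp add: fun_eq_iff fwd_diff_def fwd_diff_by_def algebra_simps)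
  then show ?case
    by (simp add: Suc)
qed simp

lemma poly_deg_le_Suc_arg: "poly_deg_le d f \<Longrightarrow> poly_deg_le d (\<lambda>x. f (Suc x))"
  unfolding poly_deg_le_def fwd_diff_funpow_Suc_arg by simp

lemma poly_deg_le_mult_arg: "poly_deg_le d f \<Longrightarrow> poly_deg_le d (\<lambda>x. f (b * x))"
  unfolding poly_deg_le_def fwd_diff_funpow_mult_arg fwd_diff_by_funpow
  by (simp add: window_sum_funpow_zero window_sum_def)

lemma poly_deg_le_prefix_sum: "poly_deg_le d f \<Longrightarrow> poly_deg_le (Suc d) (\<lambda>x. \<Sum>j<x. f j)"
  unfolding poly_deg_le_def by (simp only: funpow_Suc_right o_apply fwd_diff_prefix_sum)

lemma poly_deg_le_cmult_cancel:
  fixes f :: "nat \<Rightarrow> 'a::idom"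
  assumes "poly_deg_le d (\<lambda>x. c * f x)" and "c \<noteq> 0"
  shows "poly_deg_le d f"
  using assms unfolding poly_deg_le_def fwd_diff_funpow_cmult by (simp add: fun_eq_iff)

lemma newton_forward_expansion:
  fixes f :: "nat \<Rightarrow> 'a::comm_ring_1"
  shows "f x = (\<Sum>i\<le>x. of_nat (x choose i) * (fwd_diff ^^ i) f 0)"
proof (induction x arbitrary: f)
  case (Suc x)
  define D where "D i = (fwd_diff ^^ i) f 0" for i
  have "(fwd_diff ^^ i) (\<lambda>y. f (Suc y)) 0 = D i + D (Suc i)" for i
    by (simp add: fwd_diff_funpow_Suc_arg D_def fwd_diff_def)
  then have "f (Suc x) = (\<Sum>i\<le>x. of_nat (x choose i) * (D i + D (Suc i)))"
    using Suc[of "\<lambda>y. f (Suc y)"] by simp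
  also have "\<dots> = (\<Sum>i\<le>Suc x. of_nat (x choose i) * D i) + (\<Sum>i\<le>x. of_nat (x choose i) * D (Suc i))"
    by (simp add: sum.distrib algebra_simps binomial_eq_0)
  also have "\<dots> = (\<Sum>i\<le>Suc x. of_nat (Suc x choose i) * D i)"
    by (simp add: sum.atMost_Suc_shift sum.distrib algebra_simps del: sum.atMost_Suc)
  finally show ?case
    by (simp add: D_def)
qed simp

lemma poly_deg_le_newton:
  fixes f :: "nat \<Rightarrow> 'a::comm_ring_1"
  assumes "poly_deg_le d f"
  shows "f x = (\<Sum>i\<le>d. of_nat (x choose i) * (fwd_diff ^^ i) f 0)"
proof -
  have vanish: "(fwd_diff ^^ i) f = (\<lambda>_. 0)" if "d < i" for i
  proof -
    have "(fwd_diff ^^ i) f = (fwd_diff ^^ (i - Suc d)) ((fwd_diff ^^ Suc d) f)"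
      using that by (metis Suc_leI funpow_add le_add_diff_inverse2 o_apply)
    then show ?thesis
      using assms by (simp add: poly_deg_le_def fwd_diff_funpow_zero)
  qed
  have beyond_x: "of_nat (x choose i) * (fwd_diff ^^ i) f 0 = 0" if "x < i" for i
    using that by (simp add: binomial_eq_0)
  have "f x = (\<Sum>i\<le>x + d. of_nat (x choose i) * (fwd_diff ^^ i) f 0)"
    by (subst newton_forward_expansion) (rule sum.mono_neutral_left, auto simp: beyond_x)
  also have "\<dots> = (\<Sum>i\<le>d. of_nat (x choose i) * (fwd_diff ^^ i) f 0)"
    by (rule sum.mono_neutral_right) (auto simp: vanish)
  finally show ?thesis .
qed

section \<open>Integer-valued polynomials at multiples\<close>

lemma div_gcd_dvd_if_dvd_mult:
  fixes b l x :: int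
  assumes "b dvd l * x" and "b \<noteq> 0"
  shows "b div gcd b l dvd x"
proof -
  define g where "g = gcd b l"
  have "g \<noteq> 0" "b = g * (b div g)" "l = g * (l div g)"
    using assms(2) by (simp_all add: g_def)
  then have "b div g dvd (l div g) * x"
    using assms(1) by (metis mult.assoc dvd_mult_cancel_left)
  moreover have "coprime (b div g) (l div g)"
    using assms(2) unfolding g_def by (intro div_gcd_coprime) auto
  ultimately show ?thesis
    by (simp add: g_def coprime_dvd_mult_right_iff)
qed

lemma dvd_Lcm_mult_binomial:
  fixes b k :: nat
  assumes "1 \<le> i" and "i \<le> d"
  shows "b dvd Lcm {1..d} * (b * k choose i)"
proof -
  have "b dvd i * (b * k choose i)"
    using assms(1) by (simp add: times_binomial_minus1_eq)
  moreover have "i dvd Lcm {1..d}"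
    using assms by (intro dvd_Lcm) auto
  ultimately show ?thesis
    by (meson dvd_trans mult_dvd_mono dvd_refl)
qed

lemma calM_dvd_poly_at_multiple:
  fixes f :: "nat \<Rightarrow> int"
  assumes "poly_deg_le d f" and "f 0 = 0" and "b > 0"
  shows "int (calM b d) dvd f (b * k)"
proof -
  define l where "l = Lcm {1..d}"
  have "int b dvd int l * f (b * k)"
  proof -
    have "int l * f (b * k) = (\<Sum>i\<le>d. int (l * (b * k choose i)) * (fwd_diff ^^ i) f 0)"
      by (subst poly_deg_le_newton[OF assms(1)]) (simp add: sum_distrib_left mult.assoc)
    also have "int b dvd \<dots>"
    proof (rule dvd_sum)
      fix i assume i: "i \<in> {..d}"
      show "int b dvd int (l * (b * k choose i)) * (fwd_diff ^^ i) f 0"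
      proof (cases "i = 0")
        case False
        then have "b dvd l * (b * k choose i)"
          using i dvd_Lcm_mult_binomial[of i d b k] by (simp add: l_def)
        then show ?thesis
          by (simp only: int_dvd_int_iff dvd_mult2)
      qed (simp add: assms(2))
    qed
    finally show ?thesis .
  qed
  then have "int b div gcd (int b) (int l) dvd f (b * k)"
    using assms(3) by (intro div_gcd_dvd_if_dvd_mult) auto
  then show ?thesis
    by (simp add: calM_def l_def zdiv_int)
qed

lemma prefix_sums_at_multiples:
  fixes g :: "nat \<Rightarrow> int"
  assumes "poly_deg_le d g" and "b > 0"
  obtains h where "poly_deg_le (Suc d) h"
    and "\<And>j. (\<Sum>i<b * Suc j. g i) = int (calM b (Suc d)) * h j"
proof
  define H where "H x = (\<Sum>i<x. g i)" for x
  define c where "c = int (calM b (Suc d))"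
  have H: "poly_deg_le (Suc d) H"
    unfolding H_def using assms(1) by (rule poly_deg_le_prefix_sum)
  have dvd: "c dvd H (b * k)" for k
    unfolding c_def by (rule calM_dvd_poly_at_multiple[OF H _ assms(2)]) (simp add: H_def)
  have cancel: "c * (H (b * Suc j) div c) = H (b * Suc j)" for j
    using dvd[of "Suc j"] by (rule dvd_mult_div_cancel)
  then show "(\<Sum>i<b * Suc j. g i) = c * (H (b * Suc j) div c)" for j
    by (simp add: H_def)
  have "poly_deg_le (Suc d) (\<lambda>j. c * (H (b * Suc j) div c))"
    unfolding cancel using poly_deg_le_Suc_arg[OF poly_deg_le_mult_arg[OF H]] by simp
  moreover have "c \<noteq> 0"
    using assms(2) by (simp add: c_def calM_def div_greater_zero_iff gcd_le1_nat)
  ultimately show "poly_deg_le (Suc d) (\<lambda>j. H (b * Suc j) div c)"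
    by (rule poly_deg_le_cmult_cancel)
qed

section \<open>Splitting off the parts equal to one\<close>

definition mary_seq :: "(nat \<Rightarrow> nat) \<Rightarrow> enat \<Rightarrow> bool" where
  "mary_seq m L \<longleftrightarrow> m 0 = 1 \<and> (\<forall>j. 1 \<le> j \<longrightarrow> enat j \<le> L \<longrightarrow> 2 \<le> m j)"

definition drop_seq :: "nat \<Rightarrow> (nat \<Rightarrow> nat) \<Rightarrow> nat \<Rightarrow> nat" where
  "drop_seq s m j = (if j = 0 then 1 else m (j + s))"

definition mary_partitions :: "(nat \<Rightarrow> nat) \<Rightarrow> enat \<Rightarrow> nat \<Rightarrow> nat multiset set" where
  "mary_partitions m L N =
     {S. (\<forall>s\<in>#S. enat s \<le> L) \<and> sum_mset (image_mset (Mprod m) S) = N}"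

lemma pM_eq_card_mary_partitions: "pM m L N = card (mary_partitions m L N)"
  by (simp add: pM_def mary_partitions_def)

lemma drop_seq_0: "m 0 = 1 \<Longrightarrow> drop_seq 0 m = m"
  by (auto simp: drop_seq_def fun_eq_iff)

lemma drop_seq_1_drop_seq: "drop_seq 1 (drop_seq s m) = drop_seq (Suc s) m"
  by (auto simp: drop_seq_def fun_eq_iff)

lemma mary_seq_drop_seq:
  assumes "mary_seq m L"
  shows "mary_seq (drop_seq s m) (L - enat s)"
  unfolding mary_seq_def
proof (intro conjI allI impI)
  fix j assume j: "1 \<le> j" "enat j \<le> L - enat s"
  then have "enat (j + s) \<le> L"
    by (cases L) auto
  then show "2 \<le> drop_seq s m j"
    using assms j(1) by (simp add: mary_seq_def drop_seq_def)
qed (simp add: drop_seq_def)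

lemma Mprod_0: "Mprod m 0 = m 0"
  by (simp add: Mprod_def)

lemma Mprod_Suc: "Mprod m (Suc s) = Mprod m s * m (Suc s)"
  by (simp add: Mprod_def)

lemma Mprod_Suc_drop_seq:
  assumes "m 0 = 1"
  shows "Mprod m (Suc s) = m 1 * Mprod (drop_seq 1 m) s"
  by (induction s) (simp_all add: Mprod_Suc Mprod_0 drop_seq_def assms)

lemma Mprod_gt:
  assumes "mary_seq m L" and "enat s \<le> L"
  shows "s < Mprod m s"
  using assms(2)
proof (induction s)
  case 0
  then show ?case
    using assms(1) by (simp add: mary_seq_def Mprod_0)
next
  case (Suc s)
  then have "s < Mprod m s" and "2 \<le> m (Suc s)"
    using assms(1) order_trans[of "enat s" "enat (Suc s)" L] by (auto simp: mary_seq_def)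
  then have "Suc s * 2 \<le> Mprod m s * m (Suc s)"
    by (intro mult_le_mono) auto
  then show ?case
    by (simp add: Mprod_Suc)
qed

text \<open>Parts grow at least like \<open>s < M_s\<close>, so a partition of \<open>N\<close> has at most \<open>N\<close> parts,
  all with indices at most \<open>N\<close>.\<close>
lemma finite_mary_partitions:
  assumes "mary_seq m L"
  shows "finite (mary_partitions m L N)"
proof (rule finite_subset)
  show "mary_partitions m L N \<subseteq> (\<Union>k\<le>N. multisets_of_size {..N} k)"
  proof
    fix S assume S: "S \<in> mary_partitions m L N"
    then have gt: "s < Mprod m s" if "s \<in># S" for s
      using that Mprod_gt[OF assms] by (auto simp: mary_partitions_def)
    have "Mprod m s \<le> N" if "s \<in># S" for s
      using S that by (auto simp: mary_partitions_def dest!: multi_member_split)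
    then have "set_mset S \<subseteq> {..N}"
      using gt by fastforce
    moreover have "size S \<le> N"
    proof -
      have "size S \<le> sum_mset (image_mset (Mprod m) S)"
        unfolding size_eq_sum_mset by (intro sum_mset_mono) (fastforce dest: gt)
      then show ?thesis
        using S by (simp add: mary_partitions_def)
    qed
    ultimately show "S \<in> (\<Union>k\<le>N. multisets_of_size {..N} k)"
      by (auto simp: multisets_of_size_def)
  qed
qed auto

definition shift_down :: "nat multiset \<Rightarrow> nat multiset" where
  "shift_down S = image_mset (\<lambda>s. s - 1) (filter_mset (\<lambda>s. s \<noteq> 0) S)"

lemma replicate_zero_plus_image_Suc_shift_down:
  "replicate_mset (count S 0) 0 + image_mset Suc (shift_down S) = S"
proof -
  have "image_mset Suc (shift_down S) = filter_mset (\<lambda>s. s \<noteq> 0) S"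
    unfolding shift_down_def by (induction S) auto
  moreover have "S = filter_mset (\<lambda>s. s = 0) S + filter_mset (\<lambda>s. s \<noteq> 0) S"
    by (rule multiset_partition)
  ultimately show ?thesis
    by (metis filter_eq_replicate_mset)
qed

lemma count_image_mset_Suc_0 [simp]: "count (image_mset Suc S) 0 = 0"
  by (induction S) auto

lemma shift_down_replicate_plus_image_Suc:
  "shift_down (replicate_mset k 0 + image_mset Suc S) = S"
  unfolding shift_down_def by (induction S) auto

lemma indices_replicate_plus_image_Suc_le_eSuc:
  "(\<forall>s\<in>#replicate_mset k 0 + image_mset Suc S. enat s \<le> eSuc L) \<longleftrightarrow> (\<forall>s\<in>#S. enat s \<le> L)"
  by (auto simp flip: eSuc_enat simp: zero_enat_def[symmetric])

lemma sum_Mprod_replicate_plus_image_Suc: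
  assumes "m 0 = 1"
  shows "sum_mset (image_mset (Mprod m) (replicate_mset k 0 + image_mset Suc S))
    = k + m 1 * sum_mset (image_mset (Mprod (drop_seq 1 m)) S)"
  by (induction S) (simp_all add: Mprod_Suc_drop_seq[of m, OF assms] Mprod_0 assms algebra_simps)


text \<open>Splitting off the parts \<open>M_0 = 1\<close>: a partition of \<open>N\<close> with \<open>k\<close> ones and all other parts
  divisible by \<open>m_1\<close> corresponds to a partition of \<open>(N - k) / m_1\<close> for the sequence
  \<open>(1, m_2, m_3, \<dots>)\<close>.\<close>
lemma pM_eSuc:
  assumes "mary_seq m (eSuc L)"
  shows "pM m (eSuc L) N = (\<Sum>j\<le>N div m 1. pM (drop_seq 1 m) L j)"
proof -
  define b where "b = m 1"
  have "enat 1 \<le> eSuc L"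
    by (simp add: eSuc_enat[symmetric] zero_enat_def[symmetric])
  then have "m 0 = 1" and "b \<ge> 2"
    using assms by (auto simp: mary_seq_def b_def)
  define P where "P = mary_partitions (drop_seq 1 m) L"
  define w where "w S = sum_mset (image_mset (Mprod (drop_seq 1 m)) S)" for S
  define \<phi> where "\<phi> = (\<lambda>(j, S). replicate_mset (N - b * j) 0 + image_mset Suc S)"
  define \<psi> where "\<psi> S = ((N - count S 0) div b, shift_down S)" for S
  have weight: "sum_mset (image_mset (Mprod m) (replicate_mset k 0 + image_mset Suc S))
      = k + b * w S" for k S
    unfolding b_def w_def by (rule sum_Mprod_replicate_plus_image_Suc[of m, OF \<open>m 0 = 1\<close>])
  have decompose: "shift_down S \<in> P (w (shift_down S)) \<and> N = count S 0 + b * w (shift_down S)"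
    if "S \<in> mary_partitions m (eSuc L) N" for S
  proof -
    have "\<forall>s\<in>#S. enat s \<le> eSuc L" and "sum_mset (image_mset (Mprod m) S) = N"
      using that by (auto simp: mary_partitions_def)
    then show ?thesis
      using indices_replicate_plus_image_Suc_le_eSuc[of "count S 0" "shift_down S" L]
        weight[of "count S 0" "shift_down S"]
      unfolding replicate_zero_plus_image_Suc_shift_down by (simp add: P_def mary_partitions_def w_def)
  qed
  have "bij_betw \<phi> (SIGMA j:{..N div b}. P j) (mary_partitions m (eSuc L) N)"
  proof (rule bij_betw_byWitness[where f' = \<psi>])
    show "\<forall>p\<in>SIGMA j:{..N div b}. P j. \<psi> (\<phi> p) = p"
      using \<open>b \<ge> 2\<close>
      by (auto simp: \<phi>_def \<psi>_def shift_down_replicate_plus_image_Suc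
          less_eq_div_iff_mult_less_eq mult.commute)
    show "\<forall>S\<in>mary_partitions m (eSuc L) N. \<phi> (\<psi> S) = S"
    proof
      fix S assume "S \<in> mary_partitions m (eSuc L) N"
      then have "N = count S 0 + b * w (shift_down S)"
        using decompose by blast
      then have "N - b * ((N - count S 0) div b) = count S 0"
        using \<open>b \<ge> 2\<close> by simp
      then show "\<phi> (\<psi> S) = S"
        by (simp add: \<phi>_def \<psi>_def replicate_zero_plus_image_Suc_shift_down)
    qed
    show "\<phi> ` (SIGMA j:{..N div b}. P j) \<subseteq> mary_partitions m (eSuc L) N"
    proof
      fix S0 assume "S0 \<in> \<phi> ` (SIGMA j:{..N div b}. P j)"
      then obtain j S where "j \<le> N div b" "S \<in> P j" and S0: "S0 = \<phi> (j, S)"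
        by auto
      then have "b * j \<le> N" "\<forall>s\<in>#S. enat s \<le> L" "w S = j"
        using \<open>b \<ge> 2\<close> by (auto simp: P_def w_def mary_partitions_def less_eq_div_iff_mult_less_eq mult.commute)
      then show "S0 \<in> mary_partitions m (eSuc L) N"
        using weight[of "N - b * j" S] indices_replicate_plus_image_Suc_le_eSuc[of "N - b * j" S L]
        by (simp add: S0 \<phi>_def mary_partitions_def)
    qed
    show "\<psi> ` mary_partitions m (eSuc L) N \<subseteq> (SIGMA j:{..N div b}. P j)"
      using decompose \<open>b \<ge> 2\<close>
      by (fastforce simp: \<psi>_def less_eq_div_iff_mult_less_eq mult.commute)
  qed
  then have "pM m (eSuc L) N = card (SIGMA j:{..N div b}. P j)"
    by (simp add: pM_eq_card_mary_partitions bij_betw_same_card)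
  also have "\<dots> = (\<Sum>j\<le>N div b. card (P j))"
  proof (intro card_SigmaI ballI)
    have "mary_seq (drop_seq 1 m) L"
      using mary_seq_drop_seq[OF assms, of 1] by (metis eSuc_minus_1 one_enat_def)
    then show "finite (P j)" for j
      unfolding P_def by (rule finite_mary_partitions)
  qed simp
  finally show ?thesis
    by (simp add: P_def b_def pM_eq_card_mary_partitions)
qed

section \<open>Iterating the recurrence\<close>

lemma enat_diff_eq_eSuc_diff_Suc:
  assumes "enat (Suc s) \<le> L"
  shows "L - enat s = eSuc (L - enat (Suc s))"
  using assms by (cases L) (auto simp: eSuc_enat)

lemma pM_drop_seq_recurrence:
  assumes "mary_seq m L" and "enat (Suc s) \<le> L"
  shows "pM (drop_seq s m) (L - enat s) N
    = (\<Sum>j\<le>N div m (Suc s). pM (drop_seq (Suc s) m) (L - enat (Suc s)) j)"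
proof -
  have "mary_seq (drop_seq s m) (eSuc (L - enat (Suc s)))"
    using mary_seq_drop_seq[OF assms(1), of s] enat_diff_eq_eSuc_diff_Suc[OF assms(2)] by simp
  then show ?thesis
    unfolding enat_diff_eq_eSuc_diff_Suc[OF assms(2)]
    by (simp only: pM_eSuc drop_seq_1_drop_seq) (simp add: drop_seq_def)
qed

primrec conv_weight :: "(nat \<Rightarrow> nat) \<Rightarrow> nat \<Rightarrow> nat \<Rightarrow> nat" where
  "conv_weight a 0 k = (if k = 1 then 1 else 0)"
| "conv_weight a (Suc t) k = (\<Sum>j<a (Suc t) * k. conv_weight a t (Suc j))"

lemma sum_shifted_tail_conv_weight:
  assumes "l < n"
  shows "(\<Sum>i<b * n. if b * l \<le> i then conv_weight a t (b * n - i) else 0)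
    = (\<Sum>j<b * (n - l). conv_weight a t (Suc j))"
proof -
  have "(\<Sum>i<b * n. if b * l \<le> i then conv_weight a t (b * n - i) else 0)
      = (\<Sum>i\<in>{b * l..<b * n}. conv_weight a t (b * n - i))"
    by (simp add: sum.inter_filter[symmetric] atLeastLessThan_def Collect_conj_eq
        lessThan_def atLeast_def Int_commute)
  also have "\<dots> = (\<Sum>j<b * (n - l). conv_weight a t (Suc j))"
    using assms
    by (intro sum.reindex_bij_witness[of _ "\<lambda>j. b * n - Suc j" "\<lambda>i. b * n - Suc i"])
      (auto simp: diff_mult_distrib2 Suc_diff_Suc)
  finally show ?thesis .
qed

lemma iterated_recurrence:
  fixes F :: "nat \<Rightarrow> nat \<Rightarrow> nat"
  assumes "\<And>s N. s < r \<Longrightarrow> F s N = (\<Sum>j\<le>N div a (Suc s). F (Suc s) j)"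
    and "\<And>j. 1 \<le> j \<Longrightarrow> j \<le> r \<Longrightarrow> 0 < a j"
    and "0 < n"
  shows "F 0 ((\<Prod>i=1..r. a i) * n - 1) = (\<Sum>i<n. F r i * conv_weight a r (n - i))"
  using assms
proof (induction r arbitrary: n)
  case 0
  have "(\<Sum>i<n. F 0 i * conv_weight a 0 (n - i)) = (\<Sum>i<n. if i = n - 1 then F 0 i else 0)"
    by (intro sum.cong) auto
  then show ?case
    using \<open>0 < n\<close> by simp
next
  case (Suc r)
  define b where "b = a (Suc r)"
  have "0 < b"
    using Suc.prems(2) by (simp add: b_def)
  have IH: "F 0 ((\<Prod>i=1..r. a i) * (b * n) - 1) = (\<Sum>i<b * n. F r i * conv_weight a r (b * n - i))"
    using Suc.IH[of "b * n"] Suc.prems \<open>0 < b\<close> by simp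
  have step: "F r i = (\<Sum>l<n. if b * l \<le> i then F (Suc r) l else 0)" if "i < b * n" for i
  proof -
    have "l < n" if "b * l \<le> i" for l
      using that \<open>i < b * n\<close> by (metis le_less_trans mult_less_cancel1)
    then have "{..i div b} = {l\<in>{..<n}. b * l \<le> i}"
      using \<open>0 < b\<close> by (auto simp: less_eq_div_iff_mult_less_eq mult.commute)
    then have "F r i = (\<Sum>l\<in>{l\<in>{..<n}. b * l \<le> i}. F (Suc r) l)"
      using Suc.prems(1)[of r i] by (simp add: b_def)
    also have "\<dots> = (\<Sum>l<n. if b * l \<le> i then F (Suc r) l else 0)"
      by (rule sum.inter_filter) simp
    finally show ?thesis .
  qed
  have "F 0 ((\<Prod>i=1..Suc r. a i) * n - 1) = (\<Sum>i<b * n. F r i * conv_weight a r (b * n - i))"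
    using IH by (simp add: b_def mult.assoc)
  also have "\<dots> = (\<Sum>l<n. F (Suc r) l *
      (\<Sum>i<b * n. if b * l \<le> i then conv_weight a r (b * n - i) else 0))"
    by (simp add: step sum_distrib_right sum_distrib_left sum.swap[of _ "{..<b * n}"])
      (auto intro!: sum.cong)
  also have "\<dots> = (\<Sum>l<n. F (Suc r) l * conv_weight a (Suc r) (n - l))"
    by (intro sum.cong refl) (simp add: sum_shifted_tail_conv_weight flip: b_def)
  finally show ?case .
qed

lemma conv_weight_factorization:
  assumes "1 \<le> t" and "\<And>j. 1 \<le> j \<Longrightarrow> j \<le> t \<Longrightarrow> 0 < a j"
  shows "\<exists>g :: nat \<Rightarrow> int. poly_deg_le (t - 1) g \<and>
    (\<forall>j. int (conv_weight a t (Suc j)) = int (\<Prod>s=2..t. calM (a s) (s - 1)) * g j)"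
  using assms
proof (induction t rule: nat_induct_at_least)
  case base
  have "conv_weight a 1 (Suc j) = 1" for j
    using base[of 1] by (simp add: sum.delta')
  then have "poly_deg_le 0 (\<lambda>_. 1 :: int) \<and> (\<forall>j. int (conv_weight a 1 (Suc j)) = 1)"
    by (simp add: poly_deg_le_def fwd_diff_def fun_eq_iff)
  then show ?case
    by auto
next
  case (Suc t)
  define D where "D = int (\<Prod>s=2..t. calM (a s) (s - 1))"
  define b where "b = a (Suc t)"
  obtain g where g: "poly_deg_le (t - 1) g" and Q: "\<And>j. int (conv_weight a t (Suc j)) = D * g j"
    using Suc.IH Suc.prems unfolding D_def by force
  obtain h where h: "poly_deg_le t h"
    and sum_g: "\<And>j. (\<Sum>i<b * Suc j. g i) = int (calM b t) * h j"
    using prefix_sums_at_multiples[OF g, of b] Suc.prems[of "Suc t"] \<open>1 \<le> t\<close>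
    by (auto simp: b_def)
  have "int (conv_weight a (Suc t) (Suc j)) = D * (\<Sum>i<b * Suc j. g i)" for j
    by (simp add: b_def Q sum_distrib_left)
  also have "\<dots> j = int (\<Prod>s=2..Suc t. calM (a s) (s - 1)) * h j" for j
    using \<open>1 \<le> t\<close> sum_g[of j] by (simp add: D_def b_def)
  finally show ?case
    using h by auto
qed

corollary calM_prod_dvd_conv_weight:
  assumes "1 \<le> t" and "\<And>j. 1 \<le> j \<Longrightarrow> j \<le> t \<Longrightarrow> 0 < a j" and "0 < k"
  shows "(\<Prod>s=2..t. calM (a s) (s - 1)) dvd conv_weight a t k"
proof -
  obtain g where "int (conv_weight a t (Suc (k - 1))) = int (\<Prod>s=2..t. calM (a s) (s - 1)) * g (k - 1)"
    using conv_weight_factorization[of t a] assms(1,2) by blast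
  then show ?thesis
    using assms(3) by (simp flip: int_dvd_int_iff)
qed

theorem theorem1p3:
  fixes m :: "nat \<Rightarrow> nat" and L :: enat and n r :: nat
  assumes "m 0 = 1"
    and "\<And>j. 1 \<le> j \<Longrightarrow> enat j \<le> L \<Longrightarrow> m j \<ge> 2"
    and "n > 0" and "r > 0" and "enat r \<le> L"
  shows "(\<Prod>t=2..r. calM (m t) (t - 1)) dvd pM m L ((\<Prod>i=1..r. m i) * n - 1)"
proof -
  define F where "F s N = pM (drop_seq s m) (L - enat s) N" for s N
  have mary: "mary_seq m L"
    using assms(1,2) by (simp add: mary_seq_def)
  have pos: "0 < m j" if "1 \<le> j" "j \<le> r" for j
  proof -
    have "enat j \<le> L"
      using that(2) assms(5) order_trans[of "enat j" "enat r" L] by simp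
    then show ?thesis
      using assms(2)[OF that(1)] by simp
  qed
  have "pM m L ((\<Prod>i=1..r. m i) * n - 1) = (\<Sum>i<n. F r i * conv_weight m r (n - i))"
  proof -
    have "F s N = (\<Sum>j\<le>N div m (Suc s). F (Suc s) j)" if "s < r" for s N
      unfolding F_def using mary assms(5) that
      by (intro pM_drop_seq_recurrence) (auto intro: order_trans[of _ "enat r"])
    then show ?thesis
      using iterated_recurrence[of r F m n] pos assms(3) drop_seq_0[of m, OF assms(1)]
      by (simp add: F_def zero_enat_def[symmetric])
  qed
  moreover have "(\<Prod>t=2..r. calM (m t) (t - 1)) dvd conv_weight m r (n - i)" if "i < n" for i
    using calM_prod_dvd_conv_weight[of r m "n - i"] assms(4) pos that by simp
  ultimately show ?thesis
    by (auto intro!: dvd_sum dvd_mult)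
qed

end
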